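(* Let the setting of the context hold and suppose $\gamma$ is bounded. Then there exists a constant $b_1>0$ such that \[ P\Big[\max_{1\leq k\leq d_n}|\widehat{\mathcal{E}}_{k} - \mathcal{E}_k|> n^{-\alpha}\Big] \leq O\big( e^{-b_1 \{n^{1-2\alpha}-n^\beta\}}\big)\quad\text{for all } 0<\alpha<(1-\beta)/2. \]
   Context: For each $n$, let $\mathbf{F},\mathbf{G}$ be absolutely continuous distribution functions on $\mathbb{R}^{d_n}$. Training data: $\mathbf{X}_1,\dots,\mathbf{X}_{n_1}$ iid $\mathbf{F}$, $\mathbf{Y}_1,\dots,\mathbf{Y}_{n_2}$ iid $\mathbf{G}$, independent, $n=n_1+n_2$, $\min\{n_1,n_2\}\ge2$, $n_1/n\to\pi_1\in(0,1)$; $\log d_n=O(n^\beta)$ for fixed $0\le\beta<1$. $\gamma:[0,\infty)\to[0,\infty)$ is continuous, increasing, $\gamma(0)=0$, with non-constant completely monotone derivative. $\mathcal{E}_k=2E\gamma(|X_{1k}-Y_{1k}|^2)-E\gamma(|X_{1k}-X_{2k}|^2)-E\gamma(|Y_{1k}-Y_{2k}|^2)$ and $\widehat{\mathcal{E}}_k=\frac{2}{n_1n_2}\sum_{m_1,m_2}\gamma(|X_{m_1k}-Y_{m_2k}|^2)-\binom{n_1}{2}^{-1}\sum_{m_1<m_2}\gamma(|X_{m_1k}-X_{m_2k}|^2)-\binom{n_2}{2}^{-1}\sum_{m_1<m_2}\gamma(|Y_{m_1k}-Y_{m_2k}|^2)$. *)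

theory Defs
  imports "HOL-Probability.Probability" "HOL-Library.Landau_Symbols"
begin

definition completely_monotone_on_pos :: "(real \<Rightarrow> real) \<Rightarrow> bool" where
  "completely_monotone_on_pos f \<longleftrightarrow>
     (\<exists>D :: nat \<Rightarrow> real \<Rightarrow> real.
        (\<forall>x>0. D 0 x = f x) \<and>
        (\<forall>k. \<forall>x>0. (D k has_real_derivative D (Suc k) x) (at x)) \<and>
        (\<forall>k. \<forall>x>0. (-1) ^ k * D k x \<ge> 0))"

definition Ecal :: "'a measure \<Rightarrow> (real \<Rightarrow> real) \<Rightarrow> (nat \<Rightarrow> 'a \<Rightarrow> nat \<Rightarrow> real)
    \<Rightarrow> (nat \<Rightarrow> 'a \<Rightarrow> nat \<Rightarrow> real) \<Rightarrow> nat \<Rightarrow> real" where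
  "Ecal M \<gamma> X Y k =
     2 * (\<integral>\<omega>. \<gamma> (\<bar>X 0 \<omega> k - Y 0 \<omega> k\<bar>\<^sup>2) \<partial>M)
     - (\<integral>\<omega>. \<gamma> (\<bar>X 0 \<omega> k - X 1 \<omega> k\<bar>\<^sup>2) \<partial>M)
     - (\<integral>\<omega>. \<gamma> (\<bar>Y 0 \<omega> k - Y 1 \<omega> k\<bar>\<^sup>2) \<partial>M)"

definition Ehat :: "(real \<Rightarrow> real) \<Rightarrow> nat \<Rightarrow> nat \<Rightarrow> (nat \<Rightarrow> 'a \<Rightarrow> nat \<Rightarrow> real)
    \<Rightarrow> (nat \<Rightarrow> 'a \<Rightarrow> nat \<Rightarrow> real) \<Rightarrow> nat \<Rightarrow> 'a \<Rightarrow> real" where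
  "Ehat \<gamma> n1 n2 X Y k \<omega> =
     2 / (real n1 * real n2) *
       (\<Sum>m1<n1. \<Sum>m2<n2. \<gamma> (\<bar>X m1 \<omega> k - Y m2 \<omega> k\<bar>\<^sup>2))
     - (\<Sum>m2<n1. \<Sum>m1<m2. \<gamma> (\<bar>X m1 \<omega> k - X m2 \<omega> k\<bar>\<^sup>2)) / real (n1 choose 2)
     - (\<Sum>m2<n2. \<Sum>m1<m2. \<gamma> (\<bar>Y m1 \<omega> k - Y m2 \<omega> k\<bar>\<^sup>2)) / real (n2 choose 2)"

end

(*
  Fix a coordinate k.  The error hatE_k - E_k equals 2 D_XY - D_X - D_Y, where D_XY, D_X and D_Y
  are the deviations from their means of the two-sample and the two one-sample U-statistics of
  the bounded kernel h(x, y) = gamma(|x - y|^2).  The index pairs of these U-statistics are the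
  edges of K_{p,q} and of K_p.  Colouring the edge (i, j) by (j - i) mod max(p, q), resp. by
  (i + j) mod p, splits the edges into at most p + q classes, each a matching with at least
  (min(p, q) - 2) / 2 edges.  Along a matching the summands are independent, so Hoeffding's
  inequality controls every class mean, and the overall mean deviates only if some class mean
  does.  A union bound over the classes, the three U-statistics and the d_n coordinates gives

    P(max_k |hatE_k - E_k| > s) <= 6 d_n n exp(- s^2 (min(n1, n2) - 2) / (16 B^2)),

  and with s = n^-alpha, min(n1, n2) - 2 >= mu n and log d_n = O(n^beta) the right-hand side is
  O(exp(- b (n^(1 - 2 alpha) - n^beta))).  Only boundedness, nonnegativity and continuity of gamma
  enter.
*)
theory Submission
  imports Defs
begin

section \<open>Independent families\<close>

lemma (in prob_space) indep_vars_reindex: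
  assumes "inj_on f J" and "indep_vars M' X (f ` J)"
  shows "indep_vars (\<lambda>j. M' (f j)) (\<lambda>j. X (f j)) J"
proof -
  have rv: "\<forall>i\<in>f ` J. random_variable (M' i) (X i)"
    and indep: "indep_sets (\<lambda>i. sigma_sets (space M) {X i -` A \<inter> space M | A. A \<in> sets (M' i)}) (f ` J)"
    using assms(2) unfolding indep_vars_def by auto
  have "indep_sets (\<lambda>j. sigma_sets (space M) {X (f j) -` A \<inter> space M | A. A \<in> sets (M' (f j))}) J"
  proof (rule indep_setsI)
    show "sigma_sets (space M) {X (f j) -` A \<inter> space M | A. A \<in> sets (M' (f j))} \<subseteq> events" if "j \<in> J" for j
      using indep that unfolding indep_sets_def by blast
  next
    fix A K assume K: "K \<noteq> {}" "K \<subseteq> J" "finite K"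
      and A: "\<forall>j\<in>K. A j \<in> sigma_sets (space M) {X (f j) -` A \<inter> space M | A. A \<in> sets (M' (f j))}"
    have inj: "inj_on f K" using assms(1) K(2) by (rule inj_on_subset)
    define A' where "A' = A \<circ> the_inv_into K f"
    have A'f: "A' (f j) = A j" if "j \<in> K" for j
      using the_inv_into_f_f[OF inj that] by (simp add: A'_def)
    have "prob (\<Inter>i\<in>f ` K. A' i) = (\<Prod>i\<in>f ` K. prob (A' i))"
      by (rule indep_setsD[OF indep]) (use K A A'f in auto)
    then show "prob (\<Inter>j\<in>K. A j) = (\<Prod>j\<in>K. prob (A j))"
      using A'f by (simp add: prod.reindex[OF inj])
  qed
  then show ?thesis using rv unfolding indep_vars_def by auto
qed

lemma (in prob_space) indep_var_of_indep_vars: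
  assumes "indep_vars M' X I" "i \<in> I" "j \<in> I" "i \<noteq> j"
  shows "indep_var (M' i) (X i) (M' j) (X j)"
proof -
  have "indep_var (M' i) ((\<lambda>f. f i) \<circ> (\<lambda>\<omega>. restrict (\<lambda>i. X i \<omega>) {i}))
                  (M' j) ((\<lambda>f. f j) \<circ> (\<lambda>\<omega>. restrict (\<lambda>i. X i \<omega>) {j}))"
    using assms by (intro indep_var_compose[OF indep_var_restrict[OF assms(1)]]) auto
  then show ?thesis by (simp add: o_def)
qed

lemma (in prob_space) expectation_indep_pair_eq:
  fixes Z :: "'i \<Rightarrow> 'a \<Rightarrow> real" and h :: "real \<times> real \<Rightarrow> real"
  assumes indep: "indep_vars (\<lambda>_. borel) Z I"
    and ij: "i \<in> I" "j \<in> I" "i \<noteq> j" and ij': "i' \<in> I" "j' \<in> I" "i' \<noteq> j'"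
    and distr_i: "distr M borel (Z i) = distr M borel (Z i')"
    and distr_j: "distr M borel (Z j) = distr M borel (Z j')"
    and h: "h \<in> borel_measurable borel"
  shows "expectation (\<lambda>\<omega>. h (Z i \<omega>, Z j \<omega>)) = expectation (\<lambda>\<omega>. h (Z i' \<omega>, Z j' \<omega>))"
proof -
  have joint: "expectation (\<lambda>\<omega>. h (Z k \<omega>, Z l \<omega>))
      = integral\<^sup>L (distr M borel (Z k) \<Otimes>\<^sub>M distr M borel (Z l)) h"
    if "k \<in> I" "l \<in> I" "k \<noteq> l" for k l
  proof -
    have "indep_var borel (Z k) borel (Z l)"
      using indep_var_of_indep_vars[OF indep that] by simp
    then have "distr M borel (Z k) \<Otimes>\<^sub>M distr M borel (Z l) = distr M (borel \<Otimes>\<^sub>M borel) (\<lambda>\<omega>. (Z k \<omega>, Z l \<omega>))"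
      and "random_variable borel (Z k)" "random_variable borel (Z l)"
      by (simp_all add: indep_var_distribution_eq)
    moreover have "h \<in> borel_measurable (borel \<Otimes>\<^sub>M borel)" using h by (simp add: borel_prod)
    ultimately show ?thesis by (simp add: integral_distr)
  qed
  show ?thesis using joint[OF ij] joint[OF ij'] distr_i distr_j by simp
qed

section \<open>Hoeffding's inequality along matchings\<close>

lemma exists_class_mean_deviation:
  fixes f :: "'e \<Rightarrow> real" and cls :: "'e \<Rightarrow> 'c"
  assumes E: "finite E" "E \<noteq> {}" and dev: "t < \<bar>(\<Sum>e\<in>E. f e) / card E - \<theta>\<bar>"
  obtains r where "r \<in> cls ` E"
    "t \<le> \<bar>(\<Sum>e\<in>{e\<in>E. cls e = r}. f e) / card {e\<in>E. cls e = r} - \<theta>\<bar>"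
proof -
  define C where "C r = {e\<in>E. cls e = r}" for r
  have "\<exists>r\<in>cls ` E. t \<le> \<bar>(\<Sum>e\<in>C r. f e) / card (C r) - \<theta>\<bar>"
  proof (rule ccontr)
    assume no_class: "\<not> ?thesis"
    then have close: "\<bar>\<Sum>e\<in>C r. f e - \<theta>\<bar> \<le> t * card (C r)" if "r \<in> cls ` E" for r
    proof -
      have "card (C r) > 0" using that E by (auto simp: C_def card_gt_0_iff)
      moreover have "\<bar>(\<Sum>e\<in>C r. f e) / card (C r) - \<theta>\<bar> < t"
        using that no_class by (auto simp: not_le)
      ultimately show ?thesis by (simp add: sum_subtractf field_simps abs_divide)
    qed
    have "\<bar>\<Sum>e\<in>E. f e - \<theta>\<bar> = \<bar>\<Sum>r\<in>cls ` E. \<Sum>e\<in>C r. f e - \<theta>\<bar>"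
      unfolding C_def by (subst sum.group) (use E in auto)
    also have "\<dots> \<le> (\<Sum>r\<in>cls ` E. t * card (C r))"
      by (rule order_trans[OF sum_abs sum_mono]) (rule close)
    also have "\<dots> = t * (\<Sum>r\<in>cls ` E. \<Sum>e\<in>C r. 1)"
      by (simp add: sum_distrib_left)
    also have "\<dots> = t * card E"
      unfolding C_def by (subst sum.group) (use E in auto)
    finally show False using dev E by (simp add: sum_subtractf field_simps abs_divide card_gt_0_iff)
  qed
  then show thesis using that by (auto simp: C_def)
qed

(* Distinct edges of a matching read disjoint sets of the independent variables, so the edge
   terms are independent. *)
lemma (in prob_space) Hoeffding_matching:
  fixes Z :: "'i \<Rightarrow> 'a \<Rightarrow> real" and a b :: "'e \<Rightarrow> 'i" and h :: "real \<times> real \<Rightarrow> real"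
  assumes indep: "indep_vars (\<lambda>_. borel) Z I"
    and C: "finite C" "C \<noteq> {}" and ends: "\<And>e. e \<in> C \<Longrightarrow> a e \<in> I \<and> b e \<in> I"
    and matching: "\<And>e e'. e \<in> C \<Longrightarrow> e' \<in> C \<Longrightarrow> e \<noteq> e' \<Longrightarrow> {a e, b e} \<inter> {a e', b e'} = {}"
    and h: "h \<in> borel_measurable borel" "\<And>z. h z \<in> {0..B}" and "0 < B"
    and \<theta>: "\<And>e. e \<in> C \<Longrightarrow> expectation (\<lambda>\<omega>. h (Z (a e) \<omega>, Z (b e) \<omega>)) = \<theta>"
    and "0 \<le> t"
  shows "prob {\<omega>\<in>space M. t \<le> \<bar>(\<Sum>e\<in>C. h (Z (a e) \<omega>, Z (b e) \<omega>)) / card C - \<theta>\<bar>}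
    \<le> 2 * exp (-2 * t\<^sup>2 * card C / B\<^sup>2)"
proof -
  define W where "W e = (\<lambda>\<omega>. h (Z (a e) \<omega>, Z (b e) \<omega>))" for e
  have "indep_vars (\<lambda>e. PiM {a e, b e} (\<lambda>_. borel)) (\<lambda>e \<omega>. restrict (\<lambda>i. Z i \<omega>) {a e, b e}) C"
    by (rule indep_vars_restrict[OF indep]) (use ends matching in \<open>auto simp: disjoint_family_on_def\<close>)
  then have "indep_vars (\<lambda>_. borel) (\<lambda>e \<omega>. (\<lambda>v. h (v (a e), v (b e))) (restrict (\<lambda>i. Z i \<omega>) {a e, b e})) C"
    by (rule indep_vars_compose2) (use h(1) in measurable)
  then have indep_W: "indep_vars (\<lambda>_. borel) W C"
    by (rule indep_vars_cong[THEN iffD1, rotated -1]) (auto simp: W_def)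
  interpret Hoeffding_ineq M C W "\<lambda>_. 0" "\<lambda>_. B" "card C * \<theta>"
  proof unfold_locales
    show "AE \<omega> in M. W e \<omega> \<in> {0..B}" for e using h(2) by (simp add: W_def)
    have "(\<Sum>e\<in>C. expectation (W e)) = (\<Sum>e\<in>C. \<theta>)" by (rule sum.cong) (simp_all add: W_def \<theta>)
    then show "card C * \<theta> \<equiv> (\<Sum>e\<in>C. expectation (W e))" by simp
  qed (use C indep_W in auto)
  have card_pos: "0 < real (card C)" using C by (simp add: card_gt_0_iff)
  have "{\<omega>\<in>space M. t \<le> \<bar>(\<Sum>e\<in>C. W e \<omega>) / card C - \<theta>\<bar>}
      = {\<omega>\<in>space M. \<bar>(\<Sum>e\<in>C. W e \<omega>) - card C * \<theta>\<bar> \<ge> t * card C}"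
    using card_pos by (auto simp: field_simps abs_divide)
  also have "prob \<dots> \<le> 2 * exp (-2 * (t * card C)\<^sup>2 / (\<Sum>e\<in>C. (B - 0)\<^sup>2))"
    by (rule Hoeffding_ineq_abs_ge) (use \<open>0 \<le> t\<close> \<open>0 < B\<close> card_pos in auto)
  also have "\<dots> = 2 * exp (-2 * t\<^sup>2 * card C / B\<^sup>2)"
    using card_pos by (simp add: power2_eq_square)
  finally show ?thesis by (simp add: W_def)
qed

lemma (in prob_space) Hoeffding_matching_partition:
  fixes Z :: "'i \<Rightarrow> 'a \<Rightarrow> real" and a b :: "'e \<Rightarrow> 'i" and cls :: "'e \<Rightarrow> 'c"
    and h :: "real \<times> real \<Rightarrow> real"
  assumes indep: "indep_vars (\<lambda>_. borel) Z I"
    and E: "finite E" "E \<noteq> {}" and ends: "\<And>e. e \<in> E \<Longrightarrow> a e \<in> I \<and> b e \<in> I"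
    and matching: "\<And>e e'. e \<in> E \<Longrightarrow> e' \<in> E \<Longrightarrow> e \<noteq> e' \<Longrightarrow> cls e = cls e' \<Longrightarrow>
      {a e, b e} \<inter> {a e', b e'} = {}"
    and class_size: "\<And>e. e \<in> E \<Longrightarrow> m \<le> real (card {e'\<in>E. cls e' = cls e})"
    and h: "h \<in> borel_measurable borel" "\<And>z. h z \<in> {0..B}" and "0 < B"
    and \<theta>: "\<And>e. e \<in> E \<Longrightarrow> expectation (\<lambda>\<omega>. h (Z (a e) \<omega>, Z (b e) \<omega>)) = \<theta>"
    and "0 \<le> t"
  shows "prob {\<omega>\<in>space M. t < \<bar>(\<Sum>e\<in>E. h (Z (a e) \<omega>, Z (b e) \<omega>)) / card E - \<theta>\<bar>}
    \<le> card (cls ` E) * (2 * exp (-2 * t\<^sup>2 * m / B\<^sup>2))"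
proof -
  define W where "W e = (\<lambda>\<omega>. h (Z (a e) \<omega>, Z (b e) \<omega>))" for e
  define C where "C r = {e\<in>E. cls e = r}" for r
  define A where "A r = {\<omega>\<in>space M. t \<le> \<bar>(\<Sum>e\<in>C r. W e \<omega>) / card (C r) - \<theta>\<bar>}" for r
  have "W e \<in> borel_measurable M" if "e \<in> E" for e
  proof -
    have "random_variable borel (Z i)" if "i \<in> I" for i
      using indep that by (auto simp: indep_vars_def)
    with ends[OF that] show ?thesis
      unfolding W_def using h(1) by (simp add: borel_prod[symmetric])
  qed
  then have A_events: "A r \<in> events" for r
    unfolding A_def C_def by measurable
  have A_prob: "prob (A r) \<le> 2 * exp (-2 * t\<^sup>2 * m / B\<^sup>2)" if r: "r \<in> cls ` E" for r
  proof -
    obtain e where e: "e \<in> E" "r = cls e" using r by blast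
    have "prob (A r) \<le> 2 * exp (-2 * t\<^sup>2 * card (C r) / B\<^sup>2)"
      unfolding A_def W_def
      by (rule Hoeffding_matching[OF indep]) (use E e ends matching h \<open>0 < B\<close> \<theta> \<open>0 \<le> t\<close> in \<open>auto simp: C_def\<close>)
    also have "\<dots> \<le> 2 * exp (-2 * t\<^sup>2 * m / B\<^sup>2)"
      using class_size[OF e(1)] e(2) by (auto simp: C_def intro!: divide_right_mono mult_left_mono)
    finally show ?thesis .
  qed
  have "{\<omega>\<in>space M. t < \<bar>(\<Sum>e\<in>E. W e \<omega>) / card E - \<theta>\<bar>} \<subseteq> (\<Union>r\<in>cls ` E. A r)"
  proof
    fix \<omega> assume "\<omega> \<in> {\<omega>\<in>space M. t < \<bar>(\<Sum>e\<in>E. W e \<omega>) / card E - \<theta>\<bar>}"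
    then show "\<omega> \<in> (\<Union>r\<in>cls ` E. A r)"
      by (auto simp: A_def C_def elim!: exists_class_mean_deviation[OF E, where cls = cls])
  qed
  then have "prob {\<omega>\<in>space M. t < \<bar>(\<Sum>e\<in>E. W e \<omega>) / card E - \<theta>\<bar>} \<le> prob (\<Union>r\<in>cls ` E. A r)"
    by (rule finite_measure_mono) (use A_events E in auto)
  also have "\<dots> \<le> (\<Sum>r\<in>cls ` E. prob (A r))"
    by (rule finite_measure_subadditive_finite) (use A_events E in auto)
  also have "\<dots> \<le> card (cls ` E) * (2 * exp (-2 * t\<^sup>2 * m / B\<^sup>2))"
    using sum_mono[OF A_prob] by simp
  finally show ?thesis by (simp add: W_def)
qed

section \<open>Edge colourings by matchings\<close>

lemma dvd_abs_less_imp_zero: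
  fixes n x :: int
  assumes "n dvd x" "\<bar>x\<bar> < n"
  shows "x = 0"
  using assms dvd_imp_le_int[of x n] by fastforce

lemma eq_if_dvd_diff_less:
  fixes x y n :: nat
  assumes "int n dvd int x - int y" "x < n" "y < n"
  shows "x = y"
  using dvd_abs_less_imp_zero[OF assms(1)] assms(2,3) by simp

(* Edge colourings of the complete bipartite graph on {..<p} x {..<q} (with n = max p q) and of
   the complete graph on {..<p} (with n = p) whose colour classes are matchings. *)
definition diagonal_colour :: "nat \<Rightarrow> nat \<times> nat \<Rightarrow> int" where
  "diagonal_colour n e = (int (snd e) - int (fst e)) mod int n"

definition antidiagonal_colour :: "nat \<Rightarrow> nat \<times> nat \<Rightarrow> int" where
  "antidiagonal_colour n e = (int (fst e) + int (snd e)) mod int n"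

lemma card_image_mod_le:
  assumes "0 < n"
  shows "card ((\<lambda>x. f x mod int n) ` A) \<le> n"
proof -
  have "(\<lambda>x. f x mod int n) ` A \<subseteq> {0..<int n}" using assms by auto
  then show ?thesis using card_mono[of "{0..<int n}"] by fastforce
qed

lemma diagonal_colour_matching:
  assumes "e \<in> {..<n} \<times> {..<n}" "e' \<in> {..<n} \<times> {..<n}" "e \<noteq> e'"
    and "diagonal_colour n e = diagonal_colour n e'"
  shows "fst e \<noteq> fst e' \<and> snd e \<noteq> snd e'"
proof -
  obtain i j i' j' where e: "e = (i, j)" "e' = (i', j')" by (cases e, cases e')
  have bounds: "i < n" "j < n" "i' < n" "j' < n" using assms(1,2) by (simp_all add: e)
  have "int n dvd (int j - int i) - (int j' - int i')"
    using assms(4) by (simp add: e diagonal_colour_def mod_eq_dvd_iff)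
  then have "i = i' \<Longrightarrow> int n dvd int j - int j'" "j = j' \<Longrightarrow> int n dvd int i' - int i"
    by (simp_all add: algebra_simps)
  then have "i = i' \<longleftrightarrow> j = j'" using eq_if_dvd_diff_less bounds by metis
  then show ?thesis using assms(3) by (auto simp: e)
qed

lemma diagonal_colour_class_size:
  assumes "e \<in> {..<p} \<times> {..<q}"
  shows "min p q \<le> card {e' \<in> {..<p} \<times> {..<q}. diagonal_colour (max p q) e' = diagonal_colour (max p q) e}"
proof -
  define n where "n = max p q"
  define s where "s = diagonal_colour n e"
  define K where "K = {e' \<in> {..<p} \<times> {..<q}. diagonal_colour n e' = s}"
  have n: "0 < n" using assms by (auto simp: n_def)
  have s: "s mod int n = s" by (simp add: s_def diagonal_colour_def case_prod_beta)
  have fin: "finite K" by (simp add: K_def)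
  have "min p q \<le> card K"
  proof (cases "p \<le> q")
    case True
    define f where "f i = (i, nat ((int i + s) mod int n))" for i
    have "diagonal_colour n (f i) = s" for i
      using n s by (simp add: f_def diagonal_colour_def mod_diff_left_eq)
    moreover have "snd (f i) < q" for i
      using True n by (simp add: f_def n_def nat_less_iff)
    ultimately have "f ` {..<p} \<subseteq> K"
      unfolding K_def by (auto simp: mem_Times_iff) (simp add: f_def)
    then have "card (f ` {..<p}) \<le> card K" by (rule card_mono[OF fin])
    moreover have "inj_on f {..<p}" by (auto simp: inj_on_def f_def)
    ultimately show ?thesis using True by (simp add: card_image)
  next
    case False
    define f where "f j = (nat ((int j - s) mod int n), j)" for j
    have "diagonal_colour n (f j) = s" for j
      using n s by (simp add: f_def diagonal_colour_def mod_diff_right_eq)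
    moreover have "fst (f j) < p" for j
      using False n by (simp add: f_def n_def nat_less_iff)
    ultimately have "f ` {..<q} \<subseteq> K"
      unfolding K_def by (auto simp: mem_Times_iff) (simp add: f_def)
    then have "card (f ` {..<q}) \<le> card K" by (rule card_mono[OF fin])
    moreover have "inj_on f {..<q}" by (auto simp: inj_on_def f_def)
    ultimately show ?thesis using False by (simp add: card_image)
  qed
  then show ?thesis by (simp add: K_def s_def n_def)
qed

lemma antidiagonal_colour_matching:
  assumes "i < j" "j < p" "i' < j'" "j' < p" "(j, i) \<noteq> (j', i')"
    and "antidiagonal_colour p (j, i) = antidiagonal_colour p (j', i')"
  shows "{i, j} \<inter> {i', j'} = {}"
proof -
  have dvd: "int p dvd (int j + int i) - (int j' + int i')"
    using assms(6) by (simp add: antidiagonal_colour_def mod_eq_dvd_iff)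
  have "i = i' \<Longrightarrow> j = j'" using dvd eq_if_dvd_diff_less[of p j j'] assms(2,4) by simp
  moreover have "j = j' \<Longrightarrow> i = i'" using dvd eq_if_dvd_diff_less[of p i i'] assms by simp
  moreover have "i = j' \<Longrightarrow> j = i'" using dvd eq_if_dvd_diff_less[of p j i'] assms by simp
  moreover have "j = i' \<Longrightarrow> i = j'" using dvd eq_if_dvd_diff_less[of p i j'] assms by simp
  ultimately have "i \<noteq> i' \<and> j \<noteq> j' \<and> i \<noteq> j' \<and> j \<noteq> i'"
    using assms(1,3,5) by (metis less_asym)
  then show ?thesis by blast
qed

lemma card_mod_reflection_fixed_points_le:
  fixes r :: int
  assumes "0 \<le> r" "r < int p"
  shows "card {x\<in>{..<p}. (r - int x) mod int p = int x} \<le> 2"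
proof -
  have "{x\<in>{..<p}. (r - int x) mod int p = int x} \<subseteq> {nat r div 2, (nat r + p) div 2}"
  proof
    fix x assume x: "x \<in> {x\<in>{..<p}. (r - int x) mod int p = int x}"
    then have dvd: "int p dvd r - 2 * int x"
      using mod_eq_dvd_iff[of "r - int x" "int p" "int x"] by simp
    have "r - 2 * int x = 0 \<or> r - 2 * int x + int p = 0"
    proof (cases "r - 2 * int x > - int p")
      case True
      then show ?thesis using dvd_abs_less_imp_zero[OF dvd] assms x by simp
    next
      case False
      then show ?thesis using dvd_abs_less_imp_zero[of "int p" "r - 2 * int x + int p"] dvd assms x by simp
    qed
    then have "2 * x = nat r \<or> 2 * x = nat r + p" using assms(1) by linarith
    then show "x \<in> {nat r div 2, (nat r + p) div 2}" by auto
  qed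
  then have "card {x\<in>{..<p}. (r - int x) mod int p = int x} \<le> card {nat r div 2, (nat r + p) div 2}"
    by (rule card_mono[rotated]) simp
  also have "\<dots> \<le> 2" by (simp add: card_insert_if)
  finally show ?thesis .
qed

(* Every x < p has a unique partner x' < p with x + x' = r (mod p); the edge {x, x'} has colour r
   unless x' = x, which happens for at most two x. *)
lemma antidiagonal_colour_class_size:
  assumes "e \<in> (SIGMA j:{..<p}. {..<j})"
  shows "p \<le> 2 * card {e' \<in> (SIGMA j:{..<p}. {..<j}). antidiagonal_colour p e' = antidiagonal_colour p e} + 2"
proof -
  define r where "r = antidiagonal_colour p e"
  define K where "K = {e' \<in> (SIGMA j:{..<p}. {..<j}). antidiagonal_colour p e' = r}"
  define partner where "partner x = nat ((r - int x) mod int p)" for x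
  have p: "0 < p" using assms by auto
  have r: "0 \<le> r" "r < int p" "r mod int p = r"
    using p by (simp_all add: r_def antidiagonal_colour_def case_prod_beta)
  have partner_less: "partner x < p" for x
    using p by (simp add: partner_def nat_less_iff)
  have partner_colour: "(int x + int (partner x)) mod int p = r" for x
    using p r by (simp add: partner_def mod_add_right_eq)
  have "{x\<in>{..<p}. partner x \<noteq> x} \<subseteq> fst ` K \<union> snd ` K"
  proof
    fix x assume x: "x \<in> {x\<in>{..<p}. partner x \<noteq> x}"
    then have "(max x (partner x), min x (partner x)) \<in> K"
      using partner_less partner_colour[of x]
      by (auto simp: K_def antidiagonal_colour_def max_def min_def add.commute)
    then show "x \<in> fst ` K \<union> snd ` K"
      by (cases "x \<le> partner x") (force simp: max_def min_def)+
  qed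
  moreover have "finite K" by (simp add: K_def)
  ultimately have "card {x\<in>{..<p}. partner x \<noteq> x} \<le> card (fst ` K \<union> snd ` K)"
    by (intro card_mono) auto
  also have "\<dots> \<le> card (fst ` K) + card (snd ` K)" by (rule card_Un_le)
  also have "\<dots> \<le> 2 * card K"
    using card_image_le[of K fst] card_image_le[of K snd] by (simp add: K_def)
  finally have non_fixed: "card {x\<in>{..<p}. partner x \<noteq> x} \<le> 2 * card K" .
  have "{x\<in>{..<p}. partner x = x} = {x\<in>{..<p}. (r - int x) mod int p = int x}"
    using p by (auto simp: partner_def nat_eq_iff)
  then have fixed: "card {x\<in>{..<p}. partner x = x} \<le> 2"
    using card_mod_reflection_fixed_points_le[OF r(1,2)] by simp
  have "{..<p} = {x\<in>{..<p}. partner x \<noteq> x} \<union> {x\<in>{..<p}. partner x = x}" by blast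
  then have "p = card ({x\<in>{..<p}. partner x \<noteq> x} \<union> {x\<in>{..<p}. partner x = x})"
    by (metis card_lessThan)
  also have "\<dots> = card {x\<in>{..<p}. partner x \<noteq> x} + card {x\<in>{..<p}. partner x = x}"
    by (rule card_Un_disjoint) auto
  finally show ?thesis using non_fixed fixed by (simp add: K_def r_def)
qed

section \<open>Tail bounds for U-statistics\<close>

lemma card_pairs_below: "card (SIGMA j:{..<p}. {..<j}) = p choose 2"
proof -
  have "(\<Sum>j<p. j) = p choose 2"
    by (induction p) (auto simp: numeral_2_eq_2)
  then show ?thesis by (simp add: card_SigmaI)
qed

lemma (in prob_space) U_statistic_tail:
  fixes X :: "nat \<Rightarrow> 'a \<Rightarrow> real" and h :: "real \<times> real \<Rightarrow> real"
  assumes indep: "indep_vars (\<lambda>_. borel) X {..<p}"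
    and ident: "\<And>i. i < p \<Longrightarrow> distr M borel (X i) = distr M borel (X 0)"
    and "2 \<le> p" and h: "h \<in> borel_measurable borel" "\<And>z. h z \<in> {0..B}" and "0 < B" and "0 \<le> t"
  shows "prob {\<omega>\<in>space M. t < \<bar>(\<Sum>j<p. \<Sum>i<j. h (X i \<omega>, X j \<omega>)) / (p choose 2)
      - expectation (\<lambda>\<omega>. h (X 0 \<omega>, X 1 \<omega>))\<bar>}
    \<le> real p * (2 * exp (- t\<^sup>2 * (real p - 2) / B\<^sup>2))"
proof -
  (* The pair i < j is encoded as (j, i), the order in which the U-statistic is summed. *)
  define E where "E = (SIGMA j:{..<p}. {..<j})"
  have same_distr: "distr M borel (X i) = distr M borel (X j)" if "i < p" "j < p" for i j
    using ident[OF that(1)] ident[OF that(2)] by simp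
  have "(\<Sum>j<p. \<Sum>i<j. h (X i \<omega>, X j \<omega>)) = (\<Sum>e\<in>E. h (X (snd e) \<omega>, X (fst e) \<omega>))" for \<omega>
    by (simp add: E_def sum.Sigma case_prod_beta)
  moreover have "p choose 2 = card E" by (simp add: E_def card_pairs_below)
  ultimately have "prob {\<omega>\<in>space M. t < \<bar>(\<Sum>j<p. \<Sum>i<j. h (X i \<omega>, X j \<omega>)) / (p choose 2)
      - expectation (\<lambda>\<omega>. h (X 0 \<omega>, X 1 \<omega>))\<bar>}
    = prob {\<omega>\<in>space M. t < \<bar>(\<Sum>e\<in>E. h (X (snd e) \<omega>, X (fst e) \<omega>)) / card E
      - expectation (\<lambda>\<omega>. h (X 0 \<omega>, X 1 \<omega>))\<bar>}"
    by simp
  also have "\<dots> \<le> card (antidiagonal_colour p ` E) * (2 * exp (-2 * t\<^sup>2 * ((real p - 2) / 2) / B\<^sup>2))"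
  proof (rule Hoeffding_matching_partition[OF indep])
    show "finite E" by (simp add: E_def)
    have "(1, 0) \<in> E" using \<open>2 \<le> p\<close> by (simp add: E_def)
    then show "E \<noteq> {}" by blast
    show "snd e \<in> {..<p} \<and> fst e \<in> {..<p}" if "e \<in> E" for e
      using that unfolding E_def by (cases e) simp
    show "{snd e, fst e} \<inter> {snd e', fst e'} = {}"
      if "e \<in> E" "e' \<in> E" "e \<noteq> e'" "antidiagonal_colour p e = antidiagonal_colour p e'" for e e'
      using that antidiagonal_colour_matching[of "snd e" "fst e" p "snd e'" "fst e'"]
      unfolding E_def by (cases e, cases e') simp
    show "(real p - 2) / 2 \<le> real (card {e' \<in> E. antidiagonal_colour p e' = antidiagonal_colour p e})"
      if "e \<in> E" for e
      using antidiagonal_colour_class_size[of e p] that by (simp add: E_def)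
    show "expectation (\<lambda>\<omega>. h (X (snd e) \<omega>, X (fst e) \<omega>)) = expectation (\<lambda>\<omega>. h (X 0 \<omega>, X 1 \<omega>))"
      if "e \<in> E" for e
      using that \<open>2 \<le> p\<close> unfolding E_def
      by (intro expectation_indep_pair_eq[OF indep] same_distr h) (cases e, auto)
  qed (use h \<open>0 < B\<close> \<open>0 \<le> t\<close> in auto)
  also have "\<dots> = card (antidiagonal_colour p ` E) * (2 * exp (- t\<^sup>2 * (real p - 2) / B\<^sup>2))"
    by simp
  also have "\<dots> \<le> real p * (2 * exp (- t\<^sup>2 * (real p - 2) / B\<^sup>2))"
    using card_image_mod_le[of p _ E] \<open>2 \<le> p\<close>
    by (intro mult_right_mono) (simp_all add: antidiagonal_colour_def[abs_def])
  finally show ?thesis .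
qed

lemma (in prob_space) two_sample_U_statistic_tail:
  fixes X Y :: "nat \<Rightarrow> 'a \<Rightarrow> real" and h :: "real \<times> real \<Rightarrow> real"
  assumes indep: "indep_vars (\<lambda>_. borel) (case_sum X Y) (Inl ` {..<p} \<union> Inr ` {..<q})"
    and ident_X: "\<And>i. i < p \<Longrightarrow> distr M borel (X i) = distr M borel (X 0)"
    and ident_Y: "\<And>j. j < q \<Longrightarrow> distr M borel (Y j) = distr M borel (Y 0)"
    and "0 < p" "0 < q" and h: "h \<in> borel_measurable borel" "\<And>z. h z \<in> {0..B}" and "0 < B" and "0 \<le> t"
  shows "prob {\<omega>\<in>space M. t < \<bar>(\<Sum>i<p. \<Sum>j<q. h (X i \<omega>, Y j \<omega>)) / (real p * real q)
      - expectation (\<lambda>\<omega>. h (X 0 \<omega>, Y 0 \<omega>))\<bar>}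
    \<le> real (max p q) * (2 * exp (-2 * t\<^sup>2 * real (min p q) / B\<^sup>2))"
proof -
  define E where "E = {..<p} \<times> {..<q}"
  define colour where "colour = diagonal_colour (max p q)"
  have E_sub: "E \<subseteq> {..<max p q} \<times> {..<max p q}" by (auto simp: E_def)
  have "(\<Sum>i<p. \<Sum>j<q. h (X i \<omega>, Y j \<omega>)) = (\<Sum>e\<in>E. h (case_sum X Y (Inl (fst e)) \<omega>, case_sum X Y (Inr (snd e)) \<omega>))" for \<omega>
    by (simp add: E_def sum.cartesian_product case_prod_beta)
  moreover have "real p * real q = card E" by (simp add: E_def)
  ultimately have "prob {\<omega>\<in>space M. t < \<bar>(\<Sum>i<p. \<Sum>j<q. h (X i \<omega>, Y j \<omega>)) / (real p * real q)
      - expectation (\<lambda>\<omega>. h (X 0 \<omega>, Y 0 \<omega>))\<bar>}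
    = prob {\<omega>\<in>space M. t < \<bar>(\<Sum>e\<in>E. h (case_sum X Y (Inl (fst e)) \<omega>, case_sum X Y (Inr (snd e)) \<omega>)) / card E
      - expectation (\<lambda>\<omega>. h (case_sum X Y (Inl 0) \<omega>, case_sum X Y (Inr 0) \<omega>))\<bar>}"
    by simp
  also have "\<dots> \<le> card (colour ` E) * (2 * exp (-2 * t\<^sup>2 * real (min p q) / B\<^sup>2))"
  proof (rule Hoeffding_matching_partition[OF indep])
    show "finite E" "E \<noteq> {}" using \<open>0 < p\<close> \<open>0 < q\<close> by (auto simp: E_def)
    show "Inl (fst e) \<in> Inl ` {..<p} \<union> Inr ` {..<q} \<and> Inr (snd e) \<in> Inl ` {..<p} \<union> Inr ` {..<q}"
      if "e \<in> E" for e using that by (auto simp: E_def)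
    show "{Inl (fst e), Inr (snd e)} \<inter> {Inl (fst e'), Inr (snd e')} = {}"
      if "e \<in> E" "e' \<in> E" "e \<noteq> e'" "colour e = colour e'" for e e'
    proof -
      have "e \<in> {..<max p q} \<times> {..<max p q}" "e' \<in> {..<max p q} \<times> {..<max p q}"
        using that(1,2) E_sub by blast+
      then have "fst e \<noteq> fst e' \<and> snd e \<noteq> snd e'"
        using diagonal_colour_matching that(3,4) unfolding colour_def by blast
      then show ?thesis by auto
    qed
    show "real (min p q) \<le> real (card {e' \<in> E. colour e' = colour e})" if "e \<in> E" for e
      using diagonal_colour_class_size[of e p q] that by (simp add: E_def colour_def)
    show "expectation (\<lambda>\<omega>. h (case_sum X Y (Inl (fst e)) \<omega>, case_sum X Y (Inr (snd e)) \<omega>))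
        = expectation (\<lambda>\<omega>. h (case_sum X Y (Inl 0) \<omega>, case_sum X Y (Inr 0) \<omega>))"
      if "e \<in> E" for e
      using that \<open>0 < p\<close> \<open>0 < q\<close> unfolding E_def
      by (intro expectation_indep_pair_eq[OF indep] h) (auto intro: ident_X ident_Y)
  qed (use h \<open>0 < B\<close> \<open>0 \<le> t\<close> in auto)
  also have "\<dots> \<le> real (max p q) * (2 * exp (-2 * t\<^sup>2 * real (min p q) / B\<^sup>2))"
    using card_image_mod_le[of "max p q" _ E] \<open>0 < p\<close>
    by (intro mult_right_mono) (simp_all add: colour_def diagonal_colour_def[abs_def])
  finally show ?thesis .
qed

lemma bounded_nonneg_image_bound:
  fixes f :: "'a \<Rightarrow> real"
  assumes "bounded (f ` S)" "\<And>x. x \<in> S \<Longrightarrow> 0 \<le> f x"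
  obtains B where "0 < B" "\<And>x. x \<in> S \<Longrightarrow> f x \<in> {0..B}"
proof -
  obtain a where a: "\<forall>y\<in>f ` S. norm y \<le> a" using assms(1) by (auto simp: bounded_iff)
  have "f x \<in> {0..\<bar>a\<bar> + 1}" if "x \<in> S" for x
    using a assms(2) that by fastforce
  then show thesis using that[of "\<bar>a\<bar> + 1"] by simp
qed

lemma borel_measurable_kernel_sq_dist:
  fixes \<gamma> :: "real \<Rightarrow> real"
  assumes "continuous_on {0..} \<gamma>"
  shows "(\<lambda>z::real \<times> real. \<gamma> (\<bar>fst z - snd z\<bar>\<^sup>2)) \<in> borel_measurable borel"
proof (rule borel_measurable_continuous_onI)
  show "continuous_on UNIV (\<lambda>z::real \<times> real. \<gamma> (\<bar>fst z - snd z\<bar>\<^sup>2))"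
    by (rule continuous_on_compose2[OF assms]) (auto intro!: continuous_intros)
qed

lemma tail_bound_mono:
  fixes a a' c x x' :: real
  assumes "0 \<le> c" "a \<le> a'" "x' \<le> x" "0 \<le> a'"
  shows "a * (2 * exp (- c * x)) \<le> a' * (2 * exp (- c * x'))"
  using assms by (intro mult_mono) (auto intro: mult_left_mono)

lemma (in prob_space) U_statistics_tails:
  fixes X Y :: "nat \<Rightarrow> 'a \<Rightarrow> real" and h :: "real \<times> real \<Rightarrow> real"
  assumes indep: "indep_vars (\<lambda>_. borel) (case_sum X Y) (Inl ` {..<p} \<union> Inr ` {..<q})"
    and ident_X: "\<And>i. i < p \<Longrightarrow> distr M borel (X i) = distr M borel (X 0)"
    and ident_Y: "\<And>j. j < q \<Longrightarrow> distr M borel (Y j) = distr M borel (Y 0)"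
    and "2 \<le> p" "2 \<le> q" and h: "h \<in> borel_measurable borel" "\<And>z. h z \<in> {0..B}" and "0 < B" and "0 \<le> t"
  defines "bound \<equiv> real (p + q) * (2 * exp (- (t\<^sup>2 / B\<^sup>2) * (real (min p q) - 2)))"
  shows "prob {\<omega>\<in>space M. t < \<bar>(\<Sum>i<p. \<Sum>j<q. h (X i \<omega>, Y j \<omega>)) / (real p * real q)
      - expectation (\<lambda>\<omega>. h (X 0 \<omega>, Y 0 \<omega>))\<bar>} \<le> bound"
    and "prob {\<omega>\<in>space M. t < \<bar>(\<Sum>j<p. \<Sum>i<j. h (X i \<omega>, X j \<omega>)) / (p choose 2)
      - expectation (\<lambda>\<omega>. h (X 0 \<omega>, X 1 \<omega>))\<bar>} \<le> bound"
    and "prob {\<omega>\<in>space M. t < \<bar>(\<Sum>j<q. \<Sum>i<j. h (Y i \<omega>, Y j \<omega>)) / (q choose 2)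
      - expectation (\<lambda>\<omega>. h (Y 0 \<omega>, Y 1 \<omega>))\<bar>} \<le> bound"
proof -
  have exponent: "- t\<^sup>2 * x / B\<^sup>2 = - (t\<^sup>2 / B\<^sup>2) * x" "-2 * t\<^sup>2 * x / B\<^sup>2 = - (t\<^sup>2 / B\<^sup>2) * (2 * x)" for x
    by simp_all
  have weaken: "a * (2 * exp (- (t\<^sup>2 / B\<^sup>2) * x)) \<le> bound" if "a \<le> p + q" "real (min p q) - 2 \<le> x" for a x
    unfolding bound_def using that by (intro tail_bound_mono) auto
  have "prob {\<omega>\<in>space M. t < \<bar>(\<Sum>i<p. \<Sum>j<q. h (X i \<omega>, Y j \<omega>)) / (real p * real q)
      - expectation (\<lambda>\<omega>. h (X 0 \<omega>, Y 0 \<omega>))\<bar>}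
      \<le> real (max p q) * (2 * exp (-2 * t\<^sup>2 * real (min p q) / B\<^sup>2))"
    using \<open>2 \<le> p\<close> \<open>2 \<le> q\<close> by (intro two_sample_U_statistic_tail[OF indep] ident_X ident_Y h \<open>0 < B\<close> \<open>0 \<le> t\<close>) auto
  also have "\<dots> \<le> bound" unfolding exponent by (intro weaken) auto
  finally show "prob {\<omega>\<in>space M. t < \<bar>(\<Sum>i<p. \<Sum>j<q. h (X i \<omega>, Y j \<omega>)) / (real p * real q)
      - expectation (\<lambda>\<omega>. h (X 0 \<omega>, Y 0 \<omega>))\<bar>} \<le> bound" .
  have "indep_vars (\<lambda>_. borel) X {..<p}"
    using indep_vars_reindex[of Inl "{..<p}", OF _ indep_vars_subset[OF indep]] by simp
  then have "prob {\<omega>\<in>space M. t < \<bar>(\<Sum>j<p. \<Sum>i<j. h (X i \<omega>, X j \<omega>)) / (p choose 2)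
      - expectation (\<lambda>\<omega>. h (X 0 \<omega>, X 1 \<omega>))\<bar>} \<le> real p * (2 * exp (- t\<^sup>2 * (real p - 2) / B\<^sup>2))"
    by (rule U_statistic_tail) (use \<open>2 \<le> p\<close> h \<open>0 < B\<close> \<open>0 \<le> t\<close> in \<open>auto intro: ident_X\<close>)
  also have "\<dots> \<le> bound" unfolding exponent by (intro weaken) auto
  finally show "prob {\<omega>\<in>space M. t < \<bar>(\<Sum>j<p. \<Sum>i<j. h (X i \<omega>, X j \<omega>)) / (p choose 2)
      - expectation (\<lambda>\<omega>. h (X 0 \<omega>, X 1 \<omega>))\<bar>} \<le> bound" .
  have "indep_vars (\<lambda>_. borel) Y {..<q}"
    using indep_vars_reindex[of Inr "{..<q}", OF _ indep_vars_subset[OF indep]] by simp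
  then have "prob {\<omega>\<in>space M. t < \<bar>(\<Sum>j<q. \<Sum>i<j. h (Y i \<omega>, Y j \<omega>)) / (q choose 2)
      - expectation (\<lambda>\<omega>. h (Y 0 \<omega>, Y 1 \<omega>))\<bar>} \<le> real q * (2 * exp (- t\<^sup>2 * (real q - 2) / B\<^sup>2))"
    by (rule U_statistic_tail) (use \<open>2 \<le> q\<close> h \<open>0 < B\<close> \<open>0 \<le> t\<close> in \<open>auto intro: ident_Y\<close>)
  also have "\<dots> \<le> bound" unfolding exponent by (intro weaken) auto
  finally show "prob {\<omega>\<in>space M. t < \<bar>(\<Sum>j<q. \<Sum>i<j. h (Y i \<omega>, Y j \<omega>)) / (q choose 2)
      - expectation (\<lambda>\<omega>. h (Y 0 \<omega>, Y 1 \<omega>))\<bar>} \<le> bound" .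
qed

lemma (in prob_space) Ehat_coordinate_tail:
  fixes X Y :: "nat \<Rightarrow> 'a \<Rightarrow> nat \<Rightarrow> real" and \<gamma> :: "real \<Rightarrow> real"
  assumes indep: "indep_vars (\<lambda>_. borel) (\<lambda>i \<omega>. case_sum X Y i \<omega> k) (Inl ` {..<p} \<union> Inr ` {..<q})"
    and ident_X: "\<And>i. i < p \<Longrightarrow> distr M borel (\<lambda>\<omega>. X i \<omega> k) = distr M borel (\<lambda>\<omega>. X 0 \<omega> k)"
    and ident_Y: "\<And>j. j < q \<Longrightarrow> distr M borel (\<lambda>\<omega>. Y j \<omega> k) = distr M borel (\<lambda>\<omega>. Y 0 \<omega> k)"
    and "2 \<le> p" "2 \<le> q"
    and \<gamma>_meas: "(\<lambda>z. \<gamma> (\<bar>fst z - snd z\<bar>\<^sup>2)) \<in> borel_measurable borel"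
    and \<gamma>_bounds: "\<And>x. 0 \<le> x \<Longrightarrow> \<gamma> x \<in> {0..B}" and "0 < B" and "0 \<le> s"
  shows "{\<omega>\<in>space M. s < \<bar>Ehat \<gamma> p q X Y k \<omega> - Ecal M \<gamma> X Y k\<bar>} \<in> events"
    and "prob {\<omega>\<in>space M. s < \<bar>Ehat \<gamma> p q X Y k \<omega> - Ecal M \<gamma> X Y k\<bar>}
      \<le> 6 * real (p + q) * exp (- s\<^sup>2 * (real (min p q) - 2) / (16 * B\<^sup>2))"
proof -
  define h where "h z = \<gamma> (\<bar>fst z - snd z\<bar>\<^sup>2)" for z :: "real \<times> real"
  define X' where "X' i = (\<lambda>\<omega>. X i \<omega> k)" for i
  define Y' where "Y' j = (\<lambda>\<omega>. Y j \<omega> k)" for j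
  define D_XY where "D_XY = (\<lambda>\<omega>. (\<Sum>i<p. \<Sum>j<q. h (X' i \<omega>, Y' j \<omega>)) / (real p * real q)
    - expectation (\<lambda>\<omega>. h (X' 0 \<omega>, Y' 0 \<omega>)))"
  define D_X where "D_X = (\<lambda>\<omega>. (\<Sum>j<p. \<Sum>i<j. h (X' i \<omega>, X' j \<omega>)) / (p choose 2)
    - expectation (\<lambda>\<omega>. h (X' 0 \<omega>, X' 1 \<omega>)))"
  define D_Y where "D_Y = (\<lambda>\<omega>. (\<Sum>j<q. \<Sum>i<j. h (Y' i \<omega>, Y' j \<omega>)) / (q choose 2)
    - expectation (\<lambda>\<omega>. h (Y' 0 \<omega>, Y' 1 \<omega>)))"
  have h: "h \<in> borel_measurable borel" "h z \<in> {0..B}" for z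
    using \<gamma>_meas \<gamma>_bounds by (simp_all add: h_def[abs_def])
  have indep': "indep_vars (\<lambda>_. borel) (case_sum X' Y') (Inl ` {..<p} \<union> Inr ` {..<q})"
    using indep by (rule indep_vars_cong[THEN iffD1, rotated -1]) (auto simp: X'_def Y'_def split: sum.split)
  have dev: "Ehat \<gamma> p q X Y k \<omega> - Ecal M \<gamma> X Y k = 2 * D_XY \<omega> - D_X \<omega> - D_Y \<omega>" for \<omega>
    by (simp add: Ehat_def Ecal_def D_XY_def D_X_def D_Y_def h_def X'_def Y'_def)
  have rv: "random_variable borel (case_sum X' Y' i)" if "i \<in> Inl ` {..<p} \<union> Inr ` {..<q}" for i
    using indep' that by (auto simp: indep_vars_def)
  have "random_variable borel (X' i)" if "i < p" for i
    using rv[of "Inl i"] that by simp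
  moreover have "random_variable borel (Y' j)" if "j < q" for j
    using rv[of "Inr j"] that by simp
  moreover have pair_meas: "(\<lambda>\<omega>. h (f \<omega>, g \<omega>)) \<in> borel_measurable M"
    if "f \<in> borel_measurable M" "g \<in> borel_measurable M" for f g
    by (rule measurable_compose[OF measurable_Pair[OF that]]) (simp add: borel_prod h(1))
  ultimately have [measurable]: "D_XY \<in> borel_measurable M" "D_X \<in> borel_measurable M" "D_Y \<in> borel_measurable M"
    unfolding D_XY_def D_X_def D_Y_def
    by (auto intro!: borel_measurable_diff borel_measurable_divide borel_measurable_sum)
  show "{\<omega>\<in>space M. s < \<bar>Ehat \<gamma> p q X Y k \<omega> - Ecal M \<gamma> X Y k\<bar>} \<in> events"
    unfolding dev by measurable
  let ?A = "\<lambda>D. {\<omega>\<in>space M. s / 4 < \<bar>D \<omega>\<bar>}"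
  have events: "?A D_XY \<in> events" "?A D_X \<in> events" "?A D_Y \<in> events" by measurable
  have "{\<omega>\<in>space M. s < \<bar>Ehat \<gamma> p q X Y k \<omega> - Ecal M \<gamma> X Y k\<bar>} \<subseteq> ?A D_XY \<union> ?A D_X \<union> ?A D_Y"
  proof -
    have "s / 4 < \<bar>u\<bar> \<or> s / 4 < \<bar>v\<bar> \<or> s / 4 < \<bar>w\<bar>" if "s < \<bar>2 * u - v - w\<bar>" for u v w :: real
      using that by linarith
    then show ?thesis unfolding dev by blast
  qed
  then have "prob {\<omega>\<in>space M. s < \<bar>Ehat \<gamma> p q X Y k \<omega> - Ecal M \<gamma> X Y k\<bar>} \<le> prob (?A D_XY \<union> ?A D_X \<union> ?A D_Y)"
    by (rule finite_measure_mono) (use events in auto)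
  also have "\<dots> \<le> prob (?A D_XY) + prob (?A D_X) + prob (?A D_Y)"
    using events by (intro order_trans[OF measure_Un_le] add_mono measure_Un_le) auto
  also have "\<dots> \<le> 3 * (real (p + q) * (2 * exp (- ((s / 4)\<^sup>2 / B\<^sup>2) * (real (min p q) - 2))))"
  proof -
    have ident_X': "distr M borel (X' i) = distr M borel (X' 0)" if "i < p" for i
      unfolding X'_def using that by (rule ident_X)
    have ident_Y': "distr M borel (Y' j) = distr M borel (Y' 0)" if "j < q" for j
      unfolding Y'_def using that by (rule ident_Y)
    note tails = U_statistics_tails[OF indep' ident_X' ident_Y' \<open>2 \<le> p\<close> \<open>2 \<le> q\<close> h \<open>0 < B\<close>, of "s / 4"]
    show ?thesis
      using tails \<open>0 \<le> s\<close> unfolding D_XY_def D_X_def D_Y_def by simp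
  qed
  also have "\<dots> = 6 * real (p + q) * exp (- s\<^sup>2 * (real (min p q) - 2) / (16 * B\<^sup>2))"
    by (simp add: power_divide)
  finally show "prob {\<omega>\<in>space M. s < \<bar>Ehat \<gamma> p q X Y k \<omega> - Ecal M \<gamma> X Y k\<bar>}
      \<le> 6 * real (p + q) * exp (- s\<^sup>2 * (real (min p q) - 2) / (16 * B\<^sup>2))" .
qed

lemma max_Ehat_deviation_tail:
  fixes M :: "'a measure" and X Y :: "nat \<Rightarrow> 'a \<Rightarrow> nat \<Rightarrow> real" and \<gamma> :: "real \<Rightarrow> real"
  assumes "prob_space M"
    and indep: "prob_space.indep_vars M (\<lambda>_. PiM {..<D} (\<lambda>_. lborel))
      (\<lambda>i. case i of Inl m \<Rightarrow> X m | Inr m \<Rightarrow> Y m) (Inl ` {..<p} \<union> Inr ` {..<q})"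
    and X_distr: "\<And>m. m < p \<Longrightarrow> distr M (PiM {..<D} (\<lambda>_. lborel)) (X m) = F"
    and Y_distr: "\<And>m. m < q \<Longrightarrow> distr M (PiM {..<D} (\<lambda>_. lborel)) (Y m) = G"
    and "2 \<le> p" "2 \<le> q" "0 < D"
    and \<gamma>_meas: "(\<lambda>z. \<gamma> (\<bar>fst z - snd z\<bar>\<^sup>2)) \<in> borel_measurable borel"
    and \<gamma>_bounds: "\<And>x. 0 \<le> x \<Longrightarrow> \<gamma> x \<in> {0..B}" and "0 < B" and "0 \<le> s"
  shows "measure M {\<omega>\<in>space M. s < Max ((\<lambda>k. \<bar>Ehat \<gamma> p q X Y k \<omega> - Ecal M \<gamma> X Y k\<bar>) ` {..<D})}
    \<le> D * (6 * real (p + q) * exp (- s\<^sup>2 * (real (min p q) - 2) / (16 * B\<^sup>2)))"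
proof -
  interpret prob_space M by fact
  define A where "A k = {\<omega>\<in>space M. s < \<bar>Ehat \<gamma> p q X Y k \<omega> - Ecal M \<gamma> X Y k\<bar>}" for k
  define bound where "bound = 6 * real (p + q) * exp (- s\<^sup>2 * (real (min p q) - 2) / (16 * B\<^sup>2))"
  have coordinate: "A k \<in> events \<and> prob (A k) \<le> bound" if "k < D" for k
  proof -
    have proj: "(\<lambda>v. v k) \<in> borel_measurable (PiM {..<D} (\<lambda>_. lborel))"
      using that by (simp add: measurable_lborel2[symmetric])
    have indep_k: "indep_vars (\<lambda>_. borel) (\<lambda>i \<omega>. case_sum X Y i \<omega> k) (Inl ` {..<p} \<union> Inr ` {..<q})"
      using indep_vars_compose2[OF indep proj] by simp
    have rv: "random_variable (PiM {..<D} (\<lambda>_. lborel)) (case_sum X Y i)"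
      if "i \<in> Inl ` {..<p} \<union> Inr ` {..<q}" for i
      using indep that by (auto simp: indep_vars_def)
    have coordinate_distr: "distr M borel (\<lambda>\<omega>. Z \<omega> k) = distr H borel (\<lambda>v. v k)"
      if "random_variable (PiM {..<D} (\<lambda>_. lborel)) Z" "distr M (PiM {..<D} (\<lambda>_. lborel)) Z = H" for Z H
      using distr_distr[OF proj that(1)] that(2) by (simp add: o_def)
    have X_coordinate: "distr M borel (\<lambda>\<omega>. X i \<omega> k) = distr F borel (\<lambda>v. v k)" if "i < p" for i
      using coordinate_distr[OF _ X_distr[OF that]] rv[of "Inl i"] that by simp
    have Y_coordinate: "distr M borel (\<lambda>\<omega>. Y j \<omega> k) = distr G borel (\<lambda>v. v k)" if "j < q" for j
      using coordinate_distr[OF _ Y_distr[OF that]] rv[of "Inr j"] that by simp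
    have "distr M borel (\<lambda>\<omega>. X i \<omega> k) = distr M borel (\<lambda>\<omega>. X 0 \<omega> k)" if "i < p" for i
      using X_coordinate that \<open>2 \<le> p\<close> by simp
    moreover have "distr M borel (\<lambda>\<omega>. Y j \<omega> k) = distr M borel (\<lambda>\<omega>. Y 0 \<omega> k)" if "j < q" for j
      using Y_coordinate that \<open>2 \<le> q\<close> by simp
    ultimately show ?thesis
      unfolding A_def bound_def
      using Ehat_coordinate_tail[OF indep_k _ _ \<open>2 \<le> p\<close> \<open>2 \<le> q\<close> \<gamma>_meas \<gamma>_bounds \<open>0 < B\<close> \<open>0 \<le> s\<close>]
      by blast
  qed
  have "{\<omega>\<in>space M. s < Max ((\<lambda>k. \<bar>Ehat \<gamma> p q X Y k \<omega> - Ecal M \<gamma> X Y k\<bar>) ` {..<D})} \<subseteq> (\<Union>k<D. A k)"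
    using \<open>0 < D\<close> by (auto simp: A_def Max_gr_iff lessThan_empty_iff)
  then have "measure M {\<omega>\<in>space M. s < Max ((\<lambda>k. \<bar>Ehat \<gamma> p q X Y k \<omega> - Ecal M \<gamma> X Y k\<bar>) ` {..<D})}
      \<le> prob (\<Union>k<D. A k)"
    using coordinate by (intro finite_measure_mono) auto
  also have "\<dots> \<le> (\<Sum>k<D. prob (A k))"
    using coordinate by (intro finite_measure_subadditive_finite) auto
  also have "\<dots> \<le> D * bound"
    using sum_mono[of "{..<D}" "\<lambda>k. prob (A k)" "\<lambda>_. bound"] coordinate by simp
  finally show ?thesis by (simp add: bound_def)
qed

section \<open>Asymptotics\<close>

lemma eventually_min_sample_size_linear:
  fixes n1 n2 :: "nat \<Rightarrow> nat"
  assumes sizes: "eventually (\<lambda>n. n1 n + n2 n = n) sequentially"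
    and ratio: "(\<lambda>n. real (n1 n) / real n) \<longlonglongrightarrow> \<pi>1" and "0 < \<pi>1" "\<pi>1 < 1"
  obtains \<mu> where "0 < \<mu>" "eventually (\<lambda>n. \<mu> * real n \<le> real (min (n1 n) (n2 n)) - 2) sequentially"
proof
  define \<mu> where "\<mu> = min \<pi>1 (1 - \<pi>1) / 4"
  show "0 < \<mu>" using assms(3,4) by (simp add: \<mu>_def)
  have "eventually (\<lambda>n. \<pi>1 / 2 < real (n1 n) / real n) sequentially"
    using ratio \<open>0 < \<pi>1\<close> by (intro order_tendstoD) auto
  moreover have "eventually (\<lambda>n. real (n1 n) / real n < (1 + \<pi>1) / 2) sequentially"
    using ratio \<open>\<pi>1 < 1\<close> by (intro order_tendstoD) auto
  moreover have "eventually (\<lambda>n. 2 / \<mu> \<le> real n) sequentially"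
    using filterlim_real_sequentially unfolding filterlim_at_top by blast
  moreover have "eventually (\<lambda>n. 1 \<le> n) sequentially"
    by (rule eventually_ge_at_top)
  ultimately show "eventually (\<lambda>n. \<mu> * real n \<le> real (min (n1 n) (n2 n)) - 2) sequentially"
    using sizes
  proof eventually_elim
    case (elim n)
    then have n: "0 < real n" "2 \<le> \<mu> * real n" using \<open>0 < \<mu>\<close> by (auto simp: field_simps)
    have "4 * \<mu> * real n \<le> \<pi>1 * real n" "4 * \<mu> * real n \<le> (1 - \<pi>1) * real n"
      using n(1) by (auto simp: \<mu>_def intro!: mult_right_mono)
    moreover have "(1 - \<pi>1) * real n = real n - \<pi>1 * real n" by (simp add: algebra_simps)
    moreover have "\<pi>1 * real n < 2 * real (n1 n)" "2 * real (n1 n) < real n + \<pi>1 * real n"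
      using elim(1,2) n(1) by (simp_all add: field_simps)
    moreover have "real (n1 n) + real (n2 n) = real n" using elim(5) by (metis of_nat_add)
    ultimately have "2 * \<mu> * real n < real (n1 n)" "2 * \<mu> * real n < real (n2 n)"
      by linarith+
    then show ?case using n(2) by (simp add: min_def)
  qed
qed

lemma dimension_times_exp_decay_bigo:
  fixes d :: "nat \<Rightarrow> real"
  assumes "\<And>n. 0 < d n" and dim_growth: "(\<lambda>n. ln (d n)) \<in> O(\<lambda>n. real n powr \<beta>)"
    and "\<beta> < g" "0 < g" "0 < c"
  shows "(\<lambda>n. d n * real n * exp (- c * real n powr g))
    \<in> O(\<lambda>n. exp (- (c / 2) * (real n powr g - real n powr \<beta>)))"
proof (rule bigoI[where c = 1])
  obtain C where "0 < C" and C: "eventually (\<lambda>n. norm (ln (d n)) \<le> C * norm (real n powr \<beta>)) sequentially"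
    using landau_o.bigE[OF dim_growth] by blast
  have exponent_bound: "l + L - c * y \<le> - (c / 2) * (y - x)"
    if "L + C * x \<le> c / 2 * y" "norm l \<le> C * norm x" "0 \<le> x" "0 \<le> c * x" for l L x y :: real
    using that by (simp add: right_diff_distrib)
  have "(\<lambda>n::nat. ln (real n)) \<in> o(\<lambda>n. real n powr g)"
    using \<open>0 < g\<close> by real_asymp
  moreover have "(\<lambda>n::nat. C * real n powr \<beta>) \<in> o(\<lambda>n. real n powr g)"
    using powr_smallo_iff[OF filterlim_real_sequentially] assms(3,4) by simp
  ultimately have "(\<lambda>n::nat. ln (real n) + C * real n powr \<beta>) \<in> o(\<lambda>n. real n powr g)"
    by (rule sum_in_smallo)
  then have "eventually (\<lambda>n. norm (ln (real n) + C * real n powr \<beta>) \<le> c / 2 * norm (real n powr g)) sequentially"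
    using \<open>0 < c\<close> by (intro landau_o.smallD) auto
  then have "eventually (\<lambda>n. ln (real n) + C * real n powr \<beta> \<le> c / 2 * real n powr g) sequentially"
    by (elim eventually_mono) (metis abs_ge_self abs_of_nonneg powr_ge_zero order_trans real_norm_def)
  moreover have "eventually (\<lambda>n::nat. 1 \<le> n) sequentially" by (rule eventually_ge_at_top)
  ultimately show "eventually (\<lambda>n. norm (d n * real n * exp (- c * real n powr g))
      \<le> 1 * norm (exp (- (c / 2) * (real n powr g - real n powr \<beta>)))) sequentially"
    using C
  proof eventually_elim
    case (elim n)
    have "d n * real n * exp (- c * real n powr g) = exp (ln (d n) + ln (real n) - c * real n powr g)"
      using assms(1)[of n] elim(2) by (simp add: exp_add exp_diff exp_minus field_simps)
    also have "\<dots> \<le> exp (- (c / 2) * (real n powr g - real n powr \<beta>))"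
      using exponent_bound[OF elim(1) elim(3)] \<open>0 < c\<close> by simp
    finally show ?case using assms(1)[of n] by simp
  qed
qed

lemma exp_tail_powr_le:
  fixes x \<mu> m K D \<alpha> :: real
  assumes "0 < x" "\<mu> * x \<le> m" "0 < K" "0 \<le> D"
  shows "D * (6 * x * exp (- (x powr - \<alpha>)\<^sup>2 * m / K)) \<le> 6 * (D * x * exp (- (\<mu> / K) * x powr (1 - 2 * \<alpha>)))"
proof -
  have "(x powr - \<alpha>)\<^sup>2 = x powr (- 2 * \<alpha>)"
    using assms(1) by (simp add: power2_eq_square powr_add[symmetric])
  moreover have "x powr (1 - 2 * \<alpha>) = x powr (- 2 * \<alpha>) * x powr 1"
    by (subst powr_add[symmetric]) simp
  ultimately have "\<mu> / K * x powr (1 - 2 * \<alpha>) \<le> (x powr - \<alpha>)\<^sup>2 * m / K"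
    using mult_left_mono[OF assms(2), of "x powr (- 2 * \<alpha>)"] assms(3) abs_of_pos[OF assms(1)]
    by (simp add: field_simps)
  then have "exp (- (x powr - \<alpha>)\<^sup>2 * m / K) \<le> exp (- (\<mu> / K) * x powr (1 - 2 * \<alpha>))"
    by simp
  from mult_left_mono[OF this, of "6 * D * x"] show ?thesis
    using assms(1,4) by (simp add: ac_simps)
qed

theorem lemma5:
  fixes M :: "nat \<Rightarrow> 'a measure"
    and X Y :: "nat \<Rightarrow> nat \<Rightarrow> 'a \<Rightarrow> nat \<Rightarrow> real"
    and F G :: "nat \<Rightarrow> (nat \<Rightarrow> real) measure"
    and d n1 n2 :: "nat \<Rightarrow> nat"
    and \<gamma> :: "real \<Rightarrow> real"
    and \<pi>1 \<beta> :: real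
  assumes sizes: "\<forall>n\<ge>4. n1 n + n2 n = n \<and> 2 \<le> n1 n \<and> 2 \<le> n2 n"
    and ratio: "(\<lambda>n. real (n1 n) / real n) \<longlonglongrightarrow> \<pi>1" and pi1: "0 < \<pi>1" "\<pi>1 < 1"
    and beta: "0 \<le> \<beta>" "\<beta> < 1"
    and dim_pos: "\<forall>n. 1 \<le> d n"
    and dim_growth: "(\<lambda>n. ln (real (d n))) \<in> O(\<lambda>n. real n powr \<beta>)"
    and prob: "\<forall>n\<ge>4. prob_space (M n)"
    and F_ac: "\<forall>n\<ge>4. prob_space (F n) \<and> sets (F n) = sets (PiM {..<d n} (\<lambda>_. lborel))
                 \<and> absolutely_continuous (PiM {..<d n} (\<lambda>_. lborel)) (F n)"
    and G_ac: "\<forall>n\<ge>4. prob_space (G n) \<and> sets (G n) = sets (PiM {..<d n} (\<lambda>_. lborel))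
                 \<and> absolutely_continuous (PiM {..<d n} (\<lambda>_. lborel)) (G n)"
    and X_meas: "\<forall>n\<ge>4. \<forall>m<n1 n. X n m \<in> M n \<rightarrow>\<^sub>M PiM {..<d n} (\<lambda>_. lborel)"
    and Y_meas: "\<forall>n\<ge>4. \<forall>m<n2 n. Y n m \<in> M n \<rightarrow>\<^sub>M PiM {..<d n} (\<lambda>_. lborel)"
    and X_distr: "\<forall>n\<ge>4. \<forall>m<n1 n. distr (M n) (PiM {..<d n} (\<lambda>_. lborel)) (X n m) = F n"
    and Y_distr: "\<forall>n\<ge>4. \<forall>m<n2 n. distr (M n) (PiM {..<d n} (\<lambda>_. lborel)) (Y n m) = G n"
    and indep: "\<forall>n\<ge>4. prob_space.indep_vars (M n) (\<lambda>_. PiM {..<d n} (\<lambda>_. lborel))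
                   (\<lambda>i. case i of Inl m \<Rightarrow> X n m | Inr m \<Rightarrow> Y n m)
                   (Inl ` {..<n1 n} \<union> Inr ` {..<n2 n})"
    and \<gamma>_cont: "continuous_on {0..} \<gamma>"
    and \<gamma>_mono: "mono_on {0..} \<gamma>"
    and \<gamma>_nonneg: "\<forall>t\<ge>0. 0 \<le> \<gamma> t"
    and \<gamma>0: "\<gamma> 0 = 0"
    and \<gamma>_deriv: "\<exists>g. (\<forall>t>0. (\<gamma> has_real_derivative g t) (at t))
                    \<and> completely_monotone_on_pos g
                    \<and> \<not> (\<exists>c. \<forall>t>0. g t = c)"
    and \<gamma>_bounded: "bounded (\<gamma> ` {0..})"
  shows "\<exists>b1>0. \<forall>\<alpha>. 0 < \<alpha> \<and> \<alpha> < (1 - \<beta>) / 2 \<longrightarrow>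
           (\<lambda>n. measure (M n) {\<omega> \<in> space (M n).
               Max ((\<lambda>k. \<bar>Ehat \<gamma> (n1 n) (n2 n) (X n) (Y n) k \<omega>
                          - Ecal (M n) \<gamma> (X n) (Y n) k\<bar>) ` {..<d n}) > real n powr (-\<alpha>)})
           \<in> O(\<lambda>n. exp (- b1 * (real n powr (1 - 2 * \<alpha>) - real n powr \<beta>)))"
proof -
  obtain B where "0 < B" and \<gamma>_bounds: "\<And>x. x \<in> {0..} \<Longrightarrow> \<gamma> x \<in> {0..B}"
    using bounded_nonneg_image_bound[OF \<gamma>_bounded] \<gamma>_nonneg by (metis atLeast_iff)
  have \<gamma>_meas: "(\<lambda>z. \<gamma> (\<bar>fst z - snd z\<bar>\<^sup>2)) \<in> borel_measurable borel"
    using \<gamma>_cont by (rule borel_measurable_kernel_sq_dist)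
  have "eventually (\<lambda>n. n1 n + n2 n = n) sequentially"
    using sizes by (intro eventually_sequentiallyI[of 4]) auto
  then obtain \<mu> where "0 < \<mu>"
    and min_size: "eventually (\<lambda>n. \<mu> * real n \<le> real (min (n1 n) (n2 n)) - 2) sequentially"
    by (rule eventually_min_sample_size_linear[OF _ ratio pi1])
  define c where "c = \<mu> / (16 * B\<^sup>2)"
  let ?P = "\<lambda>\<alpha> n. measure (M n) {\<omega> \<in> space (M n).
    Max ((\<lambda>k. \<bar>Ehat \<gamma> (n1 n) (n2 n) (X n) (Y n) k \<omega> - Ecal (M n) \<gamma> (X n) (Y n) k\<bar>) ` {..<d n})
      > real n powr (-\<alpha>)}"
  show ?thesis
  proof (intro exI[of _ "c / 2"] conjI allI impI)
    show "0 < c / 2" using \<open>0 < \<mu>\<close> \<open>0 < B\<close> by (simp add: c_def)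
    fix \<alpha> :: real assume \<alpha>: "0 < \<alpha> \<and> \<alpha> < (1 - \<beta>) / 2"
    have "eventually (\<lambda>n. norm (?P \<alpha> n)
        \<le> 6 * norm (real (d n) * real n * exp (- c * real n powr (1 - 2 * \<alpha>)))) sequentially"
      using min_size eventually_ge_at_top[of 4]
    proof eventually_elim
      case (elim n)
      have "?P \<alpha> n \<le> real (d n) * (6 * real (n1 n + n2 n)
          * exp (- (real n powr (-\<alpha>))\<^sup>2 * (real (min (n1 n) (n2 n)) - 2) / (16 * B\<^sup>2)))"
        using prob indep X_distr Y_distr sizes dim_pos \<gamma>_meas \<gamma>_bounds \<open>0 < B\<close> elim(2)
        by (intro max_Ehat_deviation_tail) (auto simp: Suc_le_eq)
      also have "\<dots> = real (d n) * (6 * real n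
          * exp (- (real n powr (-\<alpha>))\<^sup>2 * (real (min (n1 n) (n2 n)) - 2) / (16 * B\<^sup>2)))"
        using sizes elim(2) by simp
      also have "\<dots> \<le> 6 * (real (d n) * real n * exp (- c * real n powr (1 - 2 * \<alpha>)))"
        unfolding c_def by (rule exp_tail_powr_le) (use elim \<open>0 < B\<close> in auto)
      finally show ?case by simp
    qed
    then have "?P \<alpha> \<in> O(\<lambda>n. real (d n) * real n * exp (- c * real n powr (1 - 2 * \<alpha>)))"
      by (rule bigoI)
    also have "(\<lambda>n. real (d n) * real n * exp (- c * real n powr (1 - 2 * \<alpha>)))
        \<in> O(\<lambda>n. exp (- (c / 2) * (real n powr (1 - 2 * \<alpha>) - real n powr \<beta>)))"
      using dim_pos dim_growth \<alpha> beta \<open>0 < \<mu>\<close> \<open>0 < B\<close>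
      by (intro dimension_times_exp_decay_bigo) (auto simp: Suc_le_eq c_def)
    finally show "?P \<alpha> \<in> O(\<lambda>n. exp (- (c / 2) * (real n powr (1 - 2 * \<alpha>) - real n powr \<beta>)))" .
  qed
qed

end
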